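(* Let $(X,d)$ be a compact metric space and $f_{0,\infty}=\{f_n\}_{n=0}^\infty$ an equi-continuous sequence of continuous surjective self-maps of $X$. For $i\ge0$ let $f_{i,\infty}=\{f_n\}_{n=i}^\infty$. Then for any $A\in\mathcal{S}$, \[h_{A}(f_{i,\infty})\geq h_{A}(f_{j,\infty}),\quad 0\leq i\leq j<\infty,\] and thus \[h^{*}(f_{i,\infty})=h^{*}(f_{j,\infty}),\quad 0\leq i\leq j<\infty.\]
   Context: $f_{0,\infty}$ is equi-continuous if for every $\epsilon>0$ there is $\delta>0$ with $d(x,y)<\delta\Rightarrow d(f_n x,f_n y)<\epsilon$ for all $n$. $f_i^n=f_{i+n-1}\circ\cdots\circ f_i$ ($n\ge1$), $f_i^0=\mathrm{id}$, $f_i^{-n}(B)=(f_i^n)^{-1}(B)$. $\mathcal S$ is the set of strictly increasing sequences $A=\{a_k\}_{k\ge1}$ of nonnegative integers. $h_A(f_{i,\infty})=\sup_{\mathscr A}\limsup_{n\to\infty}\frac1n\log\mathcal N(\bigvee_{k=1}^n f_i^{-a_k}\mathscr A)$ over finite open covers $\mathscr A$ ($\bigvee$ = common refinement, $\mathcal N$ = minimal cardinality of a subcover), and $h^*(f_{i,\infty})=\sup_{A\in\mathcal S}h_A(f_{i,\infty})$. *)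

theory Defs
  imports "HOL-Analysis.Analysis" "HOL-Library.Liminf_Limsup"
begin

text \<open>Composition of a nonautonomous sequence g (indexed from 0):
  ncomp g n = g (n-1) o ... o g 0, ncomp g 0 = id.  For f_{i,infinity} we use g = (\<lambda>n. f (n + i)),
  so ncomp g n is f_i^n.\<close>
fun ncomp :: "(nat \<Rightarrow> 'a \<Rightarrow> 'a) \<Rightarrow> nat \<Rightarrow> 'a \<Rightarrow> 'a" where
  "ncomp g 0 = id"
| "ncomp g (Suc n) = g n \<circ> ncomp g n"

definition open_covers :: "'a::metric_space set \<Rightarrow> 'a set set set" where
  "open_covers X = {\<A>. finite \<A> \<and> (\<forall>U\<in>\<A>. openin (top_of_set X) U) \<and> X \<subseteq> \<Union>\<A>}"

definition cover_preimage :: "'a set \<Rightarrow> ('a \<Rightarrow> 'a) \<Rightarrow> 'a set set \<Rightarrow> 'a set set" where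
  "cover_preimage X h \<A> = (\<lambda>B. X \<inter> h -` B) ` \<A>"

fun join_covers :: "'a set \<Rightarrow> (nat \<Rightarrow> 'a set set) \<Rightarrow> nat \<Rightarrow> 'a set set" where
  "join_covers X C 0 = {X}"
| "join_covers X C (Suc n) = {A \<inter> B | A B. A \<in> join_covers X C n \<and> B \<in> C n}"

definition Ncov :: "'a set \<Rightarrow> 'a set set \<Rightarrow> nat" where
  "Ncov X \<U> = (LEAST m. \<exists>\<V>\<subseteq>\<U>. X \<subseteq> \<Union>\<V> \<and> finite \<V> \<and> card \<V> = m)"

text \<open>Sequence entropy along a strictly increasing sequence a (a 0 plays the role of a_1).\<close>
definition seq_entropy :: "'a::metric_space set \<Rightarrow> (nat \<Rightarrow> 'a \<Rightarrow> 'a) \<Rightarrow> (nat \<Rightarrow> nat) \<Rightarrow> ereal" where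
  "seq_entropy X g a = (SUP \<A>\<in>open_covers X.
     limsup (\<lambda>n. ereal (ln (real (Ncov X (join_covers X (\<lambda>k. cover_preimage X (ncomp g (a k)) \<A>) n))) / real n)))"

definition sup_seq_entropy :: "'a::metric_space set \<Rightarrow> (nat \<Rightarrow> 'a \<Rightarrow> 'a) \<Rightarrow> ereal" where
  "sup_seq_entropy X g = (SUP a\<in>{a. strict_mono a}. seq_entropy X g a)"

end

theory Submission
  imports Defs
begin

(* Write j = i + m and g = f_i^m, so that f_j^a \<circ> g = f_i^(m + a).

   h_A(f_j) \<le> h_A(f_i): given an open cover U, a Lebesgue number of U together with the
   equicontinuity of the maps f_p^m, uniform in p, yields a cover V by small balls such that
   the join of the f_i^(-a_k) V refines the g-preimage of the join of the f_j^(-a_k) U.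
   Since g is onto, taking g-preimages does not change minimal subcover sizes, so
   N(\<Or> f_j^(-a_k) U) \<le> N(\<Or> f_i^(-a_k) V).

   h*(f_i) \<le> h*(f_j): in the join of the f_i^(-a_k) U over k < m + n the first m factors
   contribute a constant factor, and the remaining n factors form the g-preimage of the join
   of the f_j^(-b_k) U with b_k = a_(k+m) - m.  A constant factor and an index shift do not
   change the exponential growth rate, so h_A(f_i) \<le> h_B(f_j). *)

definition uniformly_equicontinuous_on :: "'a::metric_space set \<Rightarrow> ('i \<Rightarrow> 'a \<Rightarrow> 'b::metric_space) \<Rightarrow> bool" where
  "uniformly_equicontinuous_on X F \<longleftrightarrow>
     (\<forall>\<epsilon>>0. \<exists>\<delta>>0. \<forall>x\<in>X. \<forall>y\<in>X. dist x y < \<delta> \<longrightarrow> (\<forall>i. dist (F i x) (F i y) < \<epsilon>))"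

definition refines :: "'a set set \<Rightarrow> 'a set set \<Rightarrow> bool" (infix "refines" 50) where
  "C refines D \<longleftrightarrow> (\<forall>W\<in>C. \<exists>W'\<in>D. W \<subseteq> W')"

definition orbit_join :: "'a set \<Rightarrow> (nat \<Rightarrow> 'a \<Rightarrow> 'a) \<Rightarrow> (nat \<Rightarrow> nat) \<Rightarrow> 'a set set \<Rightarrow> nat \<Rightarrow> 'a set set" where
  "orbit_join X g a U n = join_covers X (\<lambda>k. cover_preimage X (ncomp g (a k)) U) n"

definition growth_rate :: "(nat \<Rightarrow> nat) \<Rightarrow> ereal" where
  "growth_rate N = limsup (\<lambda>n. ereal (ln (real (N n)) / real n))"

lemma seq_entropy_eq_SUP_growth_rate:
  "seq_entropy X g a = (SUP U\<in>open_covers X. growth_rate (\<lambda>n. Ncov X (orbit_join X g a U n)))"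
  unfolding seq_entropy_def growth_rate_def orbit_join_def ..

lemma ncomp_add: "ncomp g (a + m) = ncomp (\<lambda>n. g (n + a)) m \<circ> ncomp g a"
  by (induction m) (auto simp: add.commute)

lemma ncomp_image_subset: "(\<And>n. g n ` X \<subseteq> X) \<Longrightarrow> ncomp g m ` X \<subseteq> X"
  by (induction m) (auto simp: image_subset_iff)

lemma ncomp_image_eq:
  assumes "\<And>n. g n ` X = X"
  shows "ncomp g m ` X = X"
proof (induction m)
  case (Suc m)
  have "ncomp g (Suc m) ` X = g m ` ncomp g m ` X"
    by (simp add: image_image)
  then show ?case
    using Suc.IH assms by simp
qed simp

lemma uniformly_equicontinuous_on_ncomp:
  assumes equicont: "uniformly_equicontinuous_on X f" and maps: "\<And>n. f n ` X \<subseteq> X"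
  shows "uniformly_equicontinuous_on X (\<lambda>p. ncomp (\<lambda>n. f (n + p)) m)"
proof (induction m)
  case 0
  show ?case by (auto simp: uniformly_equicontinuous_on_def)
next
  case (Suc m)
  show ?case unfolding uniformly_equicontinuous_on_def
  proof (intro allI impI)
    fix \<epsilon> :: real assume "\<epsilon> > 0"
    then obtain \<delta>' where "\<delta>' > 0"
      and \<delta>': "\<And>x y n. x \<in> X \<Longrightarrow> y \<in> X \<Longrightarrow> dist x y < \<delta>' \<Longrightarrow> dist (f n x) (f n y) < \<epsilon>"
      using equicont unfolding uniformly_equicontinuous_on_def by metis
    then obtain \<delta> where "\<delta> > 0" and \<delta>: "\<And>x y p. x \<in> X \<Longrightarrow> y \<in> X \<Longrightarrow> dist x y < \<delta> \<Longrightarrow>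
        dist (ncomp (\<lambda>n. f (n + p)) m x) (ncomp (\<lambda>n. f (n + p)) m y) < \<delta>'"
      using Suc.IH unfolding uniformly_equicontinuous_on_def by metis
    have "ncomp (\<lambda>n. f (n + p)) m x \<in> X" if "x \<in> X" for p x
      using ncomp_image_subset[of "\<lambda>n. f (n + p)" X m] maps that by auto
    with \<delta> \<delta>' \<open>\<delta> > 0\<close> show "\<exists>\<delta>>0. \<forall>x\<in>X. \<forall>y\<in>X. dist x y < \<delta> \<longrightarrow>
        (\<forall>p. dist (ncomp (\<lambda>n. f (n + p)) (Suc m) x) (ncomp (\<lambda>n. f (n + p)) (Suc m) y) < \<epsilon>)"
      by auto
  qed
qed

lemma Ncov_le: "V \<subseteq> U \<Longrightarrow> X \<subseteq> \<Union>V \<Longrightarrow> finite V \<Longrightarrow> Ncov X U \<le> card V"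
  unfolding Ncov_def by (rule Least_le) blast

lemma Ncov_attained:
  assumes "finite U" "X \<subseteq> \<Union>U"
  obtains V where "V \<subseteq> U" "X \<subseteq> \<Union>V" "card V = Ncov X U"
proof -
  have "\<exists>m. \<exists>V\<subseteq>U. X \<subseteq> \<Union>V \<and> finite V \<and> card V = m"
    using assms by blast
  from LeastI_ex[OF this] show ?thesis
    using that unfolding Ncov_def by blast
qed

lemma Ncov_le_if_refines:
  assumes "C refines D" "finite C" "X \<subseteq> \<Union>C"
  shows "Ncov X D \<le> Ncov X C"
proof -
  obtain V where V: "V \<subseteq> C" "X \<subseteq> \<Union>V" "card V = Ncov X C"
    using Ncov_attained assms(2,3) by blast
  obtain h where h: "\<And>W. W \<in> C \<Longrightarrow> h W \<in> D \<and> W \<subseteq> h W"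
    using assms(1) unfolding refines_def by metis
  have "X \<subseteq> \<Union>(h ` V)"
    using V h by blast
  then have "Ncov X D \<le> card (h ` V)"
    using V h assms(2) by (intro Ncov_le) (auto intro: finite_subset)
  also have "\<dots> \<le> card V"
    using V assms(2) by (intro card_image_le) (auto intro: finite_subset)
  finally show ?thesis using V by simp
qed

lemma refines_cover_preimage:
  assumes "C refines D"
  shows "cover_preimage X h C refines cover_preimage X h D"
  unfolding refines_def
proof
  fix W assume "W \<in> cover_preimage X h C"
  then obtain B where "B \<in> C" and W: "W = X \<inter> h -` B"
    unfolding cover_preimage_def by blast
  then obtain B' where "B' \<in> D" "B \<subseteq> B'"
    using assms unfolding refines_def by blast
  with W show "\<exists>W'\<in>cover_preimage X h D. W \<subseteq> W'"
    unfolding cover_preimage_def by blast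
qed

lemma finite_cover_preimage: "finite U \<Longrightarrow> finite (cover_preimage X h U)"
  unfolding cover_preimage_def by simp

lemma cover_preimage_covers:
  assumes "h ` X \<subseteq> Y" "Y \<subseteq> \<Union>U"
  shows "X \<subseteq> \<Union>(cover_preimage X h U)"
proof
  fix x assume "x \<in> X"
  then obtain u where "u \<in> U" "h x \<in> u"
    using assms by blast
  with \<open>x \<in> X\<close> show "x \<in> \<Union>(cover_preimage X h U)"
    unfolding cover_preimage_def by blast
qed

lemma cover_preimage_comp:
  "g ` X \<subseteq> X \<Longrightarrow> cover_preimage X (h \<circ> g) U = cover_preimage X g (cover_preimage X h U)"
  unfolding cover_preimage_def image_image by (intro image_cong) auto

lemma Ncov_cover_preimage_le:
  assumes "g ` X \<subseteq> X" "finite U" "X \<subseteq> \<Union>U"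
  shows "Ncov X (cover_preimage X g U) \<le> Ncov X U"
proof -
  obtain V where V: "V \<subseteq> U" "X \<subseteq> \<Union>V" "card V = Ncov X U"
    using Ncov_attained assms(2,3) by blast
  have "finite V"
    using V(1) assms(2) by (rule finite_subset)
  have "cover_preimage X g V \<subseteq> cover_preimage X g U"
    using V(1) unfolding cover_preimage_def by blast
  then have "Ncov X (cover_preimage X g U) \<le> card (cover_preimage X g V)"
    using cover_preimage_covers[OF assms(1) V(2)] \<open>finite V\<close>
    by (intro Ncov_le) (auto intro: finite_cover_preimage)
  also have "\<dots> \<le> card V"
    unfolding cover_preimage_def using \<open>finite V\<close> by (rule card_image_le)
  finally show ?thesis using V by simp
qed

lemma Ncov_le_cover_preimage:
  assumes "g ` X = X" "finite U" "X \<subseteq> \<Union>U"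
  shows "Ncov X U \<le> Ncov X (cover_preimage X g U)"
proof -
  have "finite (cover_preimage X g U)" "X \<subseteq> \<Union>(cover_preimage X g U)"
    using finite_cover_preimage[OF assms(2)] cover_preimage_covers[of g X X U] assms(1,3) by auto
  then obtain V where V: "V \<subseteq> cover_preimage X g U" "X \<subseteq> \<Union>V" "card V = Ncov X (cover_preimage X g U)"
    using Ncov_attained by blast
  have "\<forall>W\<in>V. \<exists>u\<in>U. W = X \<inter> g -` u"
    using V(1) unfolding cover_preimage_def by blast
  then obtain h where h: "\<And>W. W \<in> V \<Longrightarrow> h W \<in> U \<and> W = X \<inter> g -` h W"
    by metis
  have "X \<subseteq> \<Union>(h ` V)"
  proof
    fix x assume "x \<in> X"
    then obtain y where "y \<in> X" "x = g y"
      using assms(1) by auto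
    then obtain W where "W \<in> V" "y \<in> W"
      using V(2) by auto
    then show "x \<in> \<Union>(h ` V)"
      using h \<open>x = g y\<close> by blast
  qed
  have "finite V"
    using V(1) \<open>finite (cover_preimage X g U)\<close> by (rule finite_subset)
  have "Ncov X U \<le> card (h ` V)"
    using h \<open>X \<subseteq> \<Union>(h ` V)\<close> \<open>finite V\<close> by (intro Ncov_le) auto
  also have "\<dots> \<le> card V"
    using \<open>finite V\<close> by (rule card_image_le)
  finally show ?thesis using V by simp
qed

lemma join_covers_subset: "W \<in> join_covers X C n \<Longrightarrow> W \<subseteq> X"
  by (induction n arbitrary: W) auto

lemma join_covers_Suc_eq_image:
  "join_covers X C (Suc n) = (\<lambda>(A, B). A \<inter> B) ` (join_covers X C n \<times> C n)"
  by auto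

lemma finite_join_covers: "(\<And>k. k < n \<Longrightarrow> finite (C k)) \<Longrightarrow> finite (join_covers X C n)"
  by (induction n) (auto simp: join_covers_Suc_eq_image simp del: join_covers.simps(2))

lemma join_covers_covers: "(\<And>k. k < n \<Longrightarrow> X \<subseteq> \<Union>(C k)) \<Longrightarrow> X \<subseteq> \<Union>(join_covers X C n)"
proof (induction n)
  case (Suc n)
  show ?case
  proof
    fix x assume "x \<in> X"
    have "X \<subseteq> \<Union>(join_covers X C n)" "X \<subseteq> \<Union>(C n)"
      using Suc by simp_all
    with \<open>x \<in> X\<close> obtain A B where "A \<in> join_covers X C n" "x \<in> A" "B \<in> C n" "x \<in> B"
      by blast
    then show "x \<in> \<Union>(join_covers X C (Suc n))"
      by auto
  qed
qed simp

lemma join_covers_refines: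
  "(\<And>k. k < n \<Longrightarrow> C k refines D k) \<Longrightarrow> join_covers X C n refines join_covers X D n"
proof (induction n)
  case (Suc n)
  then have "join_covers X C n refines join_covers X D n" "C n refines D n"
    by auto
  show ?case
    unfolding refines_def
  proof
    fix W assume "W \<in> join_covers X C (Suc n)"
    then obtain A B where W: "W = A \<inter> B" "A \<in> join_covers X C n" "B \<in> C n"
      by auto
    then obtain A' B' where "A' \<in> join_covers X D n" "A \<subseteq> A'" "B' \<in> D n" "B \<subseteq> B'"
      using \<open>join_covers X C n refines join_covers X D n\<close> \<open>C n refines D n\<close>
      unfolding refines_def by meson
    with W show "\<exists>W'\<in>join_covers X D (Suc n). W \<subseteq> W'"
      by (intro bexI[of _ "A' \<inter> B'"]) auto
  qed
qed (simp add: refines_def)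

lemma join_covers_cover_preimage:
  assumes "g ` X \<subseteq> X"
  shows "join_covers X (\<lambda>k. cover_preimage X g (C k)) n = cover_preimage X g (join_covers X C n)"
proof (induction n)
  case 0
  show ?case using assms by (auto simp: cover_preimage_def)
next
  case (Suc n)
  have "join_covers X (\<lambda>k. cover_preimage X g (C k)) (Suc n)
      = {(X \<inter> g -` A) \<inter> (X \<inter> g -` B) | A B. A \<in> join_covers X C n \<and> B \<in> C n}"
    using Suc.IH by (auto simp: cover_preimage_def)
  also have "\<dots> = cover_preimage X g (join_covers X C (Suc n))"
    unfolding cover_preimage_def join_covers.simps by blast
  finally show ?case .
qed

lemma Int_mem_join_covers_add:
  assumes "A \<in> join_covers X C m" "B \<in> join_covers X (\<lambda>k. C (k + m)) n"
  shows "A \<inter> B \<in> join_covers X C (m + n)"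
  using assms(2)
proof (induction n arbitrary: B)
  case 0
  then show ?case
    using join_covers_subset[OF assms(1)] assms(1) by (auto simp: Int_absorb2)
next
  case (Suc n)
  then obtain B' E where B: "B = B' \<inter> E" "B' \<in> join_covers X (\<lambda>k. C (k + m)) n" "E \<in> C (n + m)"
    by auto
  then have "(A \<inter> B') \<inter> E \<in> join_covers X C (Suc (m + n))"
    using Suc.IH by (auto simp: add.commute)
  then show ?case
    using B by (simp add: Int_assoc)
qed

lemma Ncov_join_covers_add_le:
  assumes "\<And>k. finite (C k)" "\<And>k. X \<subseteq> \<Union>(C k)"
  shows "Ncov X (join_covers X C (m + n))
    \<le> card (join_covers X C m) * Ncov X (join_covers X (\<lambda>k. C (k + m)) n)"
proof -
  let ?J = "join_covers X C m"
  obtain V where V: "V \<subseteq> join_covers X (\<lambda>k. C (k + m)) n" "X \<subseteq> \<Union>V"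
      "card V = Ncov X (join_covers X (\<lambda>k. C (k + m)) n)"
    using Ncov_attained finite_join_covers join_covers_covers assms by metis
  have "finite V"
    using V(1) by (rule finite_subset) (simp add: assms finite_join_covers)
  have "finite ?J"
    using assms(1) by (rule finite_join_covers)
  have "X \<subseteq> \<Union>?J"
    using assms(2) by (rule join_covers_covers)
  let ?W = "(\<lambda>(A, B). A \<inter> B) ` (?J \<times> V)"
  have "?W \<subseteq> join_covers X C (m + n)"
    using V(1) Int_mem_join_covers_add by fast
  moreover have "X \<subseteq> \<Union>?W"
    using \<open>X \<subseteq> \<Union>?J\<close> V(2) by blast
  ultimately have "Ncov X (join_covers X C (m + n)) \<le> card ?W"
    using \<open>finite ?J\<close> \<open>finite V\<close> by (intro Ncov_le) auto
  also have "\<dots> \<le> card (?J \<times> V)"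
    using \<open>finite ?J\<close> \<open>finite V\<close> by (intro card_image_le) auto
  finally show ?thesis
    using V(3) by (simp add: card_cartesian_product)
qed

lemma finite_orbit_join: "finite U \<Longrightarrow> finite (orbit_join X g a U n)"
  unfolding orbit_join_def by (intro finite_join_covers finite_cover_preimage)

lemma orbit_join_covers:
  assumes "\<And>n. g n ` X \<subseteq> X" "X \<subseteq> \<Union>U"
  shows "X \<subseteq> \<Union>(orbit_join X g a U n)"
  unfolding orbit_join_def
  by (intro join_covers_covers cover_preimage_covers[OF ncomp_image_subset] assms)

lemma cover_preimage_orbit_join:
  assumes "\<And>n. f n ` X \<subseteq> X"
  shows "cover_preimage X (ncomp f m) (orbit_join X (\<lambda>n. f (n + m)) a U n)
    = join_covers X (\<lambda>k. cover_preimage X (ncomp f (m + a k)) U) n"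
proof -
  have maps: "ncomp f m ` X \<subseteq> X"
    using assms by (rule ncomp_image_subset)
  have "cover_preimage X (ncomp f (m + a k)) U
      = cover_preimage X (ncomp f m) (cover_preimage X (ncomp (\<lambda>n. f (n + m)) (a k)) U)" for k
    using cover_preimage_comp[OF maps] ncomp_add[of f m "a k"] by simp
  then show ?thesis
    unfolding orbit_join_def join_covers_cover_preimage[OF maps, symmetric] by simp
qed

(* ln 0 = 0 in Isabelle, so these hold for all naturals; no nonemptiness of X is needed. *)
lemma ln_of_nat_nonneg: "0 \<le> ln (real n)"
  by (cases "n = 0") (auto intro: ln_ge_zero)

lemma ln_of_nat_mono: "m \<le> n \<Longrightarrow> ln (real m) \<le> ln (real n)"
  by (cases "m = 0") (auto simp: ln_of_nat_nonneg)

lemma ln_of_nat_mult_le: "ln (real (m * n)) \<le> ln (real m) + ln (real n)"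
  by (cases "m = 0 \<or> n = 0") (auto simp: ln_of_nat_nonneg ln_mult)

lemma growth_rate_le_shift:
  fixes N M :: "nat \<Rightarrow> nat"
  assumes "\<And>n. N (m + n) \<le> c * M n"
  shows "growth_rate N \<le> growth_rate M"
proof -
  have term_le: "ln (real (N (n + m))) / real (n + m)
      \<le> ln (real c) / real (n + m) + ln (real (M n)) / real n" if "n > 0" for n
  proof -
    have "ln (real (N (n + m))) \<le> ln (real c) + ln (real (M n))"
      using ln_of_nat_mono[OF assms[of n]] ln_of_nat_mult_le[of c "M n"] by (simp add: add.commute)
    then have "ln (real (N (n + m))) / real (n + m) \<le> (ln (real c) + ln (real (M n))) / real (n + m)"
      by (intro divide_right_mono) auto
    also have "\<dots> = ln (real c) / real (n + m) + ln (real (M n)) / real (n + m)"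
      by (rule add_divide_distrib)
    also have "\<dots> \<le> ln (real c) / real (n + m) + ln (real (M n)) / real n"
      using \<open>n > 0\<close> by (intro add_left_mono divide_left_mono ln_of_nat_nonneg) auto
    finally show ?thesis .
  qed
  have "(\<lambda>n. ln (real c) / real (n + m)) \<longlonglongrightarrow> 0"
    by (rule LIMSEQ_ignore_initial_segment[OF lim_const_over_n])
  then have "(\<lambda>n. ereal (ln (real c) / real (n + m))) \<longlonglongrightarrow> 0"
    unfolding zero_ereal_def by simp
  then have const_term: "limsup (\<lambda>n. ereal (ln (real c) / real (n + m))) = 0"
    by (intro lim_imp_Limsup) simp_all
  have "growth_rate N = limsup (\<lambda>n. ereal (ln (real (N (n + m))) / real (n + m)))"
    unfolding growth_rate_def by (rule limsup_shift_k[of "\<lambda>n. ereal (ln (real (N n)) / real n)", symmetric])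
  also have "\<dots> \<le> limsup (\<lambda>n. ereal (ln (real c) / real (n + m)) + ereal (ln (real (M n)) / real n))"
    by (intro Limsup_mono eventually_mono[OF eventually_gt_at_top[of 0]])
      (simp only: plus_ereal.simps(1) ereal_less_eq(3) term_le)
  also have "\<dots> \<le> limsup (\<lambda>n. ereal (ln (real c) / real (n + m))) + growth_rate M"
    unfolding growth_rate_def by (rule ereal_limsup_add_mono)
  finally show ?thesis
    using const_term by simp
qed

lemma growth_rate_mono: "(\<And>n. N n \<le> M n) \<Longrightarrow> growth_rate N \<le> growth_rate M"
  by (rule growth_rate_le_shift[where m = 0 and c = 1]) simp

lemma open_cover_Lebesgue_number:
  assumes "compact X" "U \<in> open_covers X"
  obtains e where "e > 0" "\<And>x. x \<in> X \<Longrightarrow> \<exists>u\<in>U. X \<inter> ball x e \<subseteq> u"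
proof -
  have "\<forall>u\<in>U. \<exists>T. open T \<and> u = X \<inter> T"
    using assms(2) unfolding open_covers_def openin_open by blast
  then obtain T where T: "\<And>u. u \<in> U \<Longrightarrow> open (T u) \<and> u = X \<inter> T u"
    by metis
  have "X \<subseteq> \<Union>(T ` U)"
    using assms(2) T unfolding open_covers_def by blast
  then obtain e where "e > 0" and e: "\<And>x. x \<in> X \<Longrightarrow> \<exists>G \<in> T ` U. ball x e \<subseteq> G"
    using Heine_Borel_lemma[OF assms(1), of "T ` U"] T by blast
  have "\<exists>u\<in>U. X \<inter> ball x e \<subseteq> u" if "x \<in> X" for x
  proof -
    obtain u where "u \<in> U" "ball x e \<subseteq> T u"
      using e \<open>x \<in> X\<close> by blast
    then show ?thesis
      using T[of u] by blast
  qed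
  with \<open>e > 0\<close> show ?thesis
    by (rule that)
qed

lemma ball_open_cover:
  assumes "compact X" "\<delta> > 0"
  obtains T where "T \<subseteq> X" "(\<lambda>x. X \<inter> ball x \<delta>) ` T \<in> open_covers X"
proof -
  have "X \<subseteq> (\<Union>x\<in>X. ball x \<delta>)"
    using assms(2) by auto
  then obtain T where T: "T \<subseteq> X" "finite T" "X \<subseteq> (\<Union>x\<in>T. ball x \<delta>)"
    by (rule compactE_image[OF assms(1) open_ball])
  have "(\<lambda>x. X \<inter> ball x \<delta>) ` T \<in> open_covers X"
    unfolding open_covers_def
  proof (intro CollectI conjI ballI)
    show "finite ((\<lambda>x. X \<inter> ball x \<delta>) ` T)"
      using T(2) by simp
    show "openin (top_of_set X) W" if "W \<in> (\<lambda>x. X \<inter> ball x \<delta>) ` T" for W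
      using that by (auto intro: openin_open_Int)
    show "X \<subseteq> \<Union>((\<lambda>x. X \<inter> ball x \<delta>) ` T)"
      using T(3) by blast
  qed
  with T(1) show ?thesis
    by (rule that)
qed

lemma ball_cover_refines_cover_preimage:
  assumes "F ` X \<subseteq> X" "T \<subseteq> X"
    and Lebesgue: "\<And>z. z \<in> X \<Longrightarrow> \<exists>u\<in>U. X \<inter> ball z e \<subseteq> u"
    and cont: "\<And>x y. x \<in> X \<Longrightarrow> y \<in> X \<Longrightarrow> dist x y < \<delta> \<Longrightarrow> dist (F x) (F y) < e"
  shows "(\<lambda>x. X \<inter> ball x \<delta>) ` T refines cover_preimage X F U"
  unfolding refines_def
proof
  fix W assume "W \<in> (\<lambda>x. X \<inter> ball x \<delta>) ` T"
  then obtain x where "x \<in> X" and W: "W = X \<inter> ball x \<delta>"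
    using assms(2) by auto
  have "F x \<in> X"
    using \<open>x \<in> X\<close> assms(1) by blast
  then obtain u where "u \<in> U" and u: "X \<inter> ball (F x) e \<subseteq> u"
    using Lebesgue by blast
  have "W \<subseteq> X \<inter> F -` u"
  proof
    fix y assume "y \<in> W"
    then have "y \<in> X" "dist (F x) (F y) < e"
      using W cont[OF \<open>x \<in> X\<close>] by auto
    then show "y \<in> X \<inter> F -` u"
      using u assms(1) by (auto simp: image_subset_iff)
  qed
  with \<open>u \<in> U\<close> show "\<exists>W'\<in>cover_preimage X F U. W \<subseteq> W'"
    unfolding cover_preimage_def by blast
qed

lemma orbit_join_refines_shifted_join:
  assumes "compact X" "\<And>n. f n ` X \<subseteq> X" "uniformly_equicontinuous_on X f" "U \<in> open_covers X"
  obtains V where "V \<in> open_covers X"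
    "\<And>n. orbit_join X f a V n refines join_covers X (\<lambda>k. cover_preimage X (ncomp f (m + a k)) U) n"
proof -
  obtain e where "e > 0" and Lebesgue: "\<And>z. z \<in> X \<Longrightarrow> \<exists>u\<in>U. X \<inter> ball z e \<subseteq> u"
    using open_cover_Lebesgue_number[OF assms(1,4)] by blast
  obtain \<delta> where "\<delta> > 0" and \<delta>: "\<And>x y p. x \<in> X \<Longrightarrow> y \<in> X \<Longrightarrow> dist x y < \<delta> \<Longrightarrow>
      dist (ncomp (\<lambda>n. f (n + p)) m x) (ncomp (\<lambda>n. f (n + p)) m y) < e"
    using uniformly_equicontinuous_on_ncomp[OF assms(3,2), of m] \<open>e > 0\<close>
    unfolding uniformly_equicontinuous_on_def by metis
  obtain T where "T \<subseteq> X" and V: "(\<lambda>x. X \<inter> ball x \<delta>) ` T \<in> open_covers X"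
    using ball_open_cover[OF assms(1) \<open>\<delta> > 0\<close>] by blast
  have "cover_preimage X (ncomp f (a k)) ((\<lambda>x. X \<inter> ball x \<delta>) ` T)
      refines cover_preimage X (ncomp f (m + a k)) U" for k
  proof -
    let ?F = "ncomp (\<lambda>n. f (n + a k)) m"
    have maps: "ncomp f (a k) ` X \<subseteq> X" "?F ` X \<subseteq> X"
      by (intro ncomp_image_subset assms(2))+
    have "ncomp f (m + a k) = ?F \<circ> ncomp f (a k)"
      using ncomp_add[of f "a k" m] by (simp add: add.commute)
    then have "cover_preimage X (ncomp f (m + a k)) U
        = cover_preimage X (ncomp f (a k)) (cover_preimage X ?F U)"
      using cover_preimage_comp[OF maps(1)] by simp
    moreover have "(\<lambda>x. X \<inter> ball x \<delta>) ` T refines cover_preimage X ?F U"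
      using maps(2) \<open>T \<subseteq> X\<close> Lebesgue \<delta> by (rule ball_cover_refines_cover_preimage)
    ultimately show ?thesis
      by (simp add: refines_cover_preimage)
  qed
  then have "orbit_join X f a ((\<lambda>x. X \<inter> ball x \<delta>) ` T) n
      refines join_covers X (\<lambda>k. cover_preimage X (ncomp f (m + a k)) U) n" for n
    unfolding orbit_join_def by (intro join_covers_refines)
  with V show ?thesis
    by (rule that)
qed

lemma Ncov_orbit_join_shift_le:
  assumes "compact X" "\<And>n. f n ` X = X" "uniformly_equicontinuous_on X f" "U \<in> open_covers X"
  obtains V where "V \<in> open_covers X"
    "\<And>n. Ncov X (orbit_join X (\<lambda>n. f (n + m)) a U n) \<le> Ncov X (orbit_join X f a V n)"
proof -
  have maps: "\<And>n. f n ` X \<subseteq> X"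
    using assms(2) by simp
  obtain V where V: "V \<in> open_covers X" and refines:
    "\<And>n. orbit_join X f a V n refines join_covers X (\<lambda>k. cover_preimage X (ncomp f (m + a k)) U) n"
    using orbit_join_refines_shifted_join[OF assms(1) maps assms(3,4)] by blast
  have U: "finite U" "X \<subseteq> \<Union>U"
    using assms(4) unfolding open_covers_def by auto
  have "Ncov X (orbit_join X (\<lambda>n. f (n + m)) a U n) \<le> Ncov X (orbit_join X f a V n)" for n
  proof -
    have "Ncov X (orbit_join X (\<lambda>n. f (n + m)) a U n)
        \<le> Ncov X (cover_preimage X (ncomp f m) (orbit_join X (\<lambda>n. f (n + m)) a U n))"
      using U maps
      by (intro Ncov_le_cover_preimage ncomp_image_eq assms(2) finite_orbit_join orbit_join_covers) auto
    also have "\<dots> = Ncov X (join_covers X (\<lambda>k. cover_preimage X (ncomp f (m + a k)) U) n)"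
      by (simp only: cover_preimage_orbit_join[of f X, OF maps])
    also have "\<dots> \<le> Ncov X (orbit_join X f a V n)"
      using V maps unfolding open_covers_def
      by (intro Ncov_le_if_refines refines finite_orbit_join orbit_join_covers) auto
    finally show ?thesis .
  qed
  with V show ?thesis
    by (rule that)
qed

lemma strict_mono_shift_diff:
  fixes a :: "nat \<Rightarrow> nat"
  assumes "strict_mono a"
  shows "strict_mono (\<lambda>k. a (k + m) - m)"
proof (rule strict_monoI)
  fix x y :: nat assume "x < y"
  then have "a (x + m) < a (y + m)"
    using assms by (simp add: strict_mono_less)
  moreover have "m \<le> a (x + m)"
    using seq_suble[OF assms, of "x + m"] by simp
  ultimately show "a (x + m) - m < a (y + m) - m"
    by (rule diff_less_mono)
qed

lemma Ncov_orbit_join_add_le: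
  assumes maps: "\<And>n. f n ` X \<subseteq> X" and "strict_mono a" "finite U" "X \<subseteq> \<Union>U"
  shows "Ncov X (orbit_join X f a U (m + n))
    \<le> card (orbit_join X f a U m) * Ncov X (orbit_join X (\<lambda>n. f (n + m)) (\<lambda>k. a (k + m) - m) U n)"
proof -
  let ?P = "\<lambda>k. cover_preimage X (ncomp f (a k)) U"
  let ?b = "\<lambda>k. a (k + m) - m"
  have "m + ?b k = a (k + m)" for k
    using seq_suble[OF assms(2), of "k + m"] by simp
  then have tail: "join_covers X (\<lambda>k. ?P (k + m)) n
      = cover_preimage X (ncomp f m) (orbit_join X (\<lambda>n. f (n + m)) ?b U n)"
    using cover_preimage_orbit_join[of f X m ?b U n, OF maps] by simp
  have covers: "X \<subseteq> \<Union>(?P k)" for k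
    by (intro cover_preimage_covers[OF ncomp_image_subset] maps assms(4))
  have "Ncov X (orbit_join X f a U (m + n))
      \<le> card (orbit_join X f a U m) * Ncov X (join_covers X (\<lambda>k. ?P (k + m)) n)"
    unfolding orbit_join_def using assms(3) covers
    by (intro Ncov_join_covers_add_le finite_cover_preimage)
  also have "\<dots> \<le> card (orbit_join X f a U m) * Ncov X (orbit_join X (\<lambda>n. f (n + m)) ?b U n)"
    unfolding tail using maps assms(3,4)
    by (intro mult_le_mono2 Ncov_cover_preimage_le ncomp_image_subset finite_orbit_join orbit_join_covers)
  finally show ?thesis .
qed

lemma seq_entropy_shift_le:
  assumes "compact X" "\<And>n. f n ` X = X" "uniformly_equicontinuous_on X f"
  shows "seq_entropy X (\<lambda>n. f (n + m)) a \<le> seq_entropy X f a"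
  unfolding seq_entropy_eq_SUP_growth_rate
proof (rule SUP_least)
  fix U assume "U \<in> open_covers X"
  then obtain V where "V \<in> open_covers X"
    "\<And>n. Ncov X (orbit_join X (\<lambda>n. f (n + m)) a U n) \<le> Ncov X (orbit_join X f a V n)"
    using Ncov_orbit_join_shift_le[OF assms] by blast
  then show "growth_rate (\<lambda>n. Ncov X (orbit_join X (\<lambda>n. f (n + m)) a U n))
      \<le> (SUP V\<in>open_covers X. growth_rate (\<lambda>n. Ncov X (orbit_join X f a V n)))"
    by (intro SUP_upper2 growth_rate_mono)
qed

lemma seq_entropy_le_shift:
  assumes "\<And>n. f n ` X \<subseteq> X" "strict_mono a"
  shows "seq_entropy X f a \<le> seq_entropy X (\<lambda>n. f (n + m)) (\<lambda>k. a (k + m) - m)"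
  unfolding seq_entropy_eq_SUP_growth_rate
proof (rule SUP_mono)
  fix U assume "U \<in> open_covers X"
  then have "finite U" "X \<subseteq> \<Union>U"
    unfolding open_covers_def by auto
  then have "growth_rate (\<lambda>n. Ncov X (orbit_join X f a U n))
      \<le> growth_rate (\<lambda>n. Ncov X (orbit_join X (\<lambda>n. f (n + m)) (\<lambda>k. a (k + m) - m) U n))"
    by (intro growth_rate_le_shift[where m = m and c = "card (orbit_join X f a U m)"]
        Ncov_orbit_join_add_le assms)
  with \<open>U \<in> open_covers X\<close> show "\<exists>V\<in>open_covers X. growth_rate (\<lambda>n. Ncov X (orbit_join X f a U n))
      \<le> growth_rate (\<lambda>n. Ncov X (orbit_join X (\<lambda>n. f (n + m)) (\<lambda>k. a (k + m) - m) V n))"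
    by blast
qed

lemma sup_seq_entropy_shift:
  assumes "compact X" "\<And>n. f n ` X = X" "uniformly_equicontinuous_on X f"
  shows "sup_seq_entropy X (\<lambda>n. f (n + m)) = sup_seq_entropy X f"
  unfolding sup_seq_entropy_def
proof (rule antisym)
  show "(SUP a\<in>{a. strict_mono a}. seq_entropy X (\<lambda>n. f (n + m)) a)
      \<le> (SUP a\<in>{a. strict_mono a}. seq_entropy X f a)"
    using seq_entropy_shift_le[OF assms] by (intro SUP_mono) blast
  have "\<And>n. f n ` X \<subseteq> X"
    using assms(2) by simp
  then show "(SUP a\<in>{a. strict_mono a}. seq_entropy X f a)
      \<le> (SUP a\<in>{a. strict_mono a}. seq_entropy X (\<lambda>n. f (n + m)) a)"
    using seq_entropy_le_shift strict_mono_shift_diff by (intro SUP_mono) blast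
qed

theorem proposition4p6:
  fixes X :: "'a::metric_space set" and f :: "nat \<Rightarrow> 'a \<Rightarrow> 'a"
  assumes "compact X"
    and "\<And>n. continuous_on X (f n)"
    and "\<And>n. f n ` X = X"
    and "\<And>\<epsilon>. \<epsilon> > 0 \<Longrightarrow> \<exists>\<delta>>0. \<forall>x\<in>X. \<forall>y\<in>X. dist x y < \<delta> \<longrightarrow> (\<forall>n. dist (f n x) (f n y) < \<epsilon>)"
  shows "(\<forall>a i j. strict_mono a \<and> i \<le> j \<longrightarrow>
            seq_entropy X (\<lambda>n. f (n + i)) a \<ge> seq_entropy X (\<lambda>n. f (n + j)) a)
       \<and> (\<forall>i j. i \<le> j \<longrightarrow>
            sup_seq_entropy X (\<lambda>n. f (n + i)) = sup_seq_entropy X (\<lambda>n. f (n + j)))"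
proof -
  have surj: "\<And>n. f (n + i) ` X = X" and equicont: "uniformly_equicontinuous_on X (\<lambda>n. f (n + i))" for i
    using assms(3,4) unfolding uniformly_equicontinuous_on_def by blast+
  have shift: "(\<lambda>n. f (n + j)) = (\<lambda>n. f (n + (j - i) + i))" if "i \<le> j" for i j :: nat
    using that by simp
  show ?thesis
  proof (intro conjI allI impI)
    fix a :: "nat \<Rightarrow> nat" and i j :: nat
    assume "strict_mono a \<and> i \<le> j"
    then have "i \<le> j" by simp
    show "seq_entropy X (\<lambda>n. f (n + j)) a \<le> seq_entropy X (\<lambda>n. f (n + i)) a"
      unfolding shift[OF \<open>i \<le> j\<close>] by (rule seq_entropy_shift_le[OF assms(1) surj equicont])
  next
    fix i j :: nat
    assume "i \<le> j"
    show "sup_seq_entropy X (\<lambda>n. f (n + i)) = sup_seq_entropy X (\<lambda>n. f (n + j))"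
      unfolding shift[OF \<open>i \<le> j\<close>] by (rule sup_seq_entropy_shift[OF assms(1) surj equicont, symmetric])
  qed
qed

end
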